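(* Let $R$ be a Noetherian ring, let $I$ be a proper ideal of $R$, and let $n$ be an integer with $n\geq \operatorname{ara}(I)$. If every $(n+1)$-generated ideal $J\subseteq I$ with $\sqrt{J}=\sqrt{I}$ has an $n$-generated reduction, then $I$ has an $n$-generated reduction.
   Context: The arithmetic rank $\operatorname{ara}(I)$ of a proper ideal $I$ of a Noetherian ring $R$ is the least number $n$ such that $\sqrt{I}=\sqrt{(x_1,\ldots,x_n)R}$ for some $x_1,\ldots,x_n\in I$. A reduction of an ideal $I$ is an ideal $J\subseteq I$ such that $I^{m+1}=JI^m$ for some $m>0$; it is $n$-generated if it can be generated by $n$ elements. *)

theory Defs
  imports "HOL-Algebra.Ideal_Product" "HOL-Algebra.Ring_Divisibility"
begin

definition ideal_radical :: "('a, 'b) ring_scheme \<Rightarrow> 'a set \<Rightarrow> 'a set" where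
  "ideal_radical R I = {x \<in> carrier R. \<exists>k::nat. x [^]\<^bsub>R\<^esub> k \<in> I}"

fun ideal_pow :: "('a, 'b) ring_scheme \<Rightarrow> 'a set \<Rightarrow> nat \<Rightarrow> 'a set" where
  "ideal_pow R I 0 = carrier R"
| "ideal_pow R I (Suc m) = ideal_prod R I (ideal_pow R I m)"

definition n_generated :: "('a, 'b) ring_scheme \<Rightarrow> nat \<Rightarrow> 'a set \<Rightarrow> bool" where
  "n_generated R n J \<longleftrightarrow>
     (\<exists>xs. length xs = n \<and> set xs \<subseteq> carrier R \<and> J = Idl\<^bsub>R\<^esub> (set xs))"

definition ara :: "('a, 'b) ring_scheme \<Rightarrow> 'a set \<Rightarrow> nat" where
  "ara R I = (LEAST n. \<exists>xs. length xs = n \<and> set xs \<subseteq> I \<and>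
                 ideal_radical R (Idl\<^bsub>R\<^esub> (set xs)) = ideal_radical R I)"

definition is_reduction :: "('a, 'b) ring_scheme \<Rightarrow> 'a set \<Rightarrow> 'a set \<Rightarrow> bool" where
  "is_reduction R J I \<longleftrightarrow> ideal J R \<and> J \<subseteq> I \<and>
     (\<exists>m>0. ideal_pow R I (Suc m) = ideal_prod R J (ideal_pow R I m))"

end

theory Submission
  imports Defs
begin

text \<open>Pad a list of ara(I) elements of I with the same radical as I by zeros to a list x of
  length n, and add the finitely many generators b of I one at a time, keeping an n-generated
  reduction K of the ideal generated so far. The ideal K + (b) is (n+1)-generated, lies in I and
  has the radical of I, so by hypothesis it has an n-generated reduction K'. Since reductions are
  stable under adding an ideal, K + (b) is a reduction of the next ideal, and by transitivity of
  reductions so is K'.\<close>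

lemma ideal_prod_mono:
  assumes "A \<subseteq> A'" "B \<subseteq> B'"
  shows "ideal_prod R A B \<subseteq> ideal_prod R A' B'"
proof
  fix x assume "x \<in> ideal_prod R A B"
  then show "x \<in> ideal_prod R A' B'"
    by (induct x rule: ideal_prod.induct) (use assms in \<open>auto intro: ideal_prod.intros\<close>)
qed

lemma ideal_pow_mono: "I \<subseteq> J \<Longrightarrow> ideal_pow R I k \<subseteq> ideal_pow R J k"
  by (induct k) (simp_all add: ideal_prod_mono)

lemma set_add_mono: "X \<subseteq> X' \<Longrightarrow> set_add R X Y \<subseteq> set_add R X' Y"
  unfolding set_add_def' by blast

lemma ideal_radical_mono: "I \<subseteq> J \<Longrightarrow> ideal_radical R I \<subseteq> ideal_radical R J"
  unfolding ideal_radical_def by blast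

context ring
begin

lemma set_add_subset_ideal:
  assumes "ideal Z R" "X \<subseteq> Z" "Y \<subseteq> Z"
  shows "set_add R X Y \<subseteq> Z"
  using assms additive_subgroup.a_closed[OF ideal.axioms(1)[OF assms(1)]]
  unfolding set_add_def' by blast

lemma Un_subset_set_add:
  assumes "ideal X R" "ideal Y R"
  shows "X \<union> Y \<subseteq> set_add R X Y"
  using genideal_self[of "X \<union> Y"] union_genideal[OF assms] ideal.Icarr[OF assms(1)] ideal.Icarr[OF assms(2)]
  by blast

lemma genideal_Un:
  assumes "S \<subseteq> carrier R" "T \<subseteq> carrier R"
  shows "Idl (S \<union> T) = set_add R (Idl S) (Idl T)"
proof -
  have ideals: "ideal (Idl S) R" "ideal (Idl T) R"
    using assms by (simp_all add: genideal_ideal)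
  have "set_add R (Idl S) (Idl T) \<subseteq> Idl (S \<union> T)"
    using assms by (intro set_add_subset_ideal genideal_ideal subset_Idl_subset) auto
  moreover have "Idl (S \<union> T) \<subseteq> set_add R (Idl S) (Idl T)"
    using Un_subset_set_add[OF ideals] genideal_self[OF assms(1)] genideal_self[OF assms(2)]
    by (intro genideal_minimal add_ideals ideals) blast
  ultimately show ?thesis by blast
qed

lemma genideal_insert_zero:
  assumes "S \<subseteq> carrier R"
  shows "Idl (insert \<zero> S) = Idl S"
proof -
  have "\<zero> \<in> Idl S"
    using genideal_ideal[OF assms] by (simp add: additive_subgroup.zero_closed ideal.axioms(1))
  then show ?thesis
    using assms genideal_self[OF assms]
    by (intro equalityI genideal_minimal genideal_ideal subset_Idl_subset) auto
qed

lemma ideal_pow_is_ideal: "ideal I R \<Longrightarrow> ideal (ideal_pow R I k) R"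
  by (induct k) (simp_all add: oneideal ideal_prod_is_ideal)

lemma nat_pow_mem_ideal_pow:
  assumes "ideal I R" "x \<in> I"
  shows "x [^] k \<in> ideal_pow R I k"
proof (induct k)
  case 0
  then show ?case using assms by (simp add: ideal.Icarr)
next
  case (Suc k)
  have "x \<otimes> x [^] k \<in> ideal_prod R I (ideal_pow R I k)"
    by (rule ideal_prod.prod[OF assms(2) Suc])
  then show ?case by (simp only: ideal_pow.simps nat_pow_Suc2[OF ideal.Icarr[OF assms]])
qed

lemma is_reduction_refl: "ideal I R \<Longrightarrow> is_reduction R I I"
  unfolding is_reduction_def by (auto intro!: exI[of _ "Suc 0"])

lemma is_reduction_radical_eq:
  assumes "is_reduction R K L" "ideal L R"
  shows "ideal_radical R K = ideal_radical R L"
proof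
  from assms obtain m where K: "ideal K R" "K \<subseteq> L"
    and m: "ideal_pow R L (Suc m) = ideal_prod R K (ideal_pow R L m)"
    unfolding is_reduction_def by auto
  show "ideal_radical R K \<subseteq> ideal_radical R L" by (rule ideal_radical_mono[OF K(2)])
  show "ideal_radical R L \<subseteq> ideal_radical R K"
  proof
    fix y assume "y \<in> ideal_radical R L"
    then obtain k :: nat where y: "y \<in> carrier R" "y [^] k \<in> L"
      unfolding ideal_radical_def by auto
    have "(y [^] k) [^] Suc m \<in> ideal_pow R L (Suc m)"
      by (rule nat_pow_mem_ideal_pow[OF assms(2) y(2)])
    also have "\<dots> \<subseteq> K"
      using m ideal_prod_inter[OF K(1) ideal_pow_is_ideal[OF assms(2)]] by auto
    finally have "y [^] (k * Suc m) \<in> K" by (simp only: nat_pow_pow[OF y(1)])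
    then show "y \<in> ideal_radical R K" using y(1) unfolding ideal_radical_def by blast
  qed
qed

end

context cring
begin

lemma ideal_prod_one_left: "ideal I R \<Longrightarrow> ideal_prod R (carrier R) I = I"
  by (simp add: ideal_prod_commute oneideal ideal_prod_one)

lemma ideal_pow_add:
  assumes "ideal I R"
  shows "ideal_pow R I (a + b) = ideal_prod R (ideal_pow R I a) (ideal_pow R I b)"
  by (induct a) (simp_all add: assms ideal_prod_one_left ideal_prod_assoc ideal_pow_is_ideal)

lemma is_reduction_trans:
  assumes "is_reduction R K J" "is_reduction R J L" "ideal L R"
  shows "is_reduction R K L"
proof -
  from assms(1) obtain s where K: "ideal K R" "K \<subseteq> J"
    and s: "ideal_pow R J (Suc s) = ideal_prod R K (ideal_pow R J s)"
    unfolding is_reduction_def by auto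
  from assms(2) obtain r where J: "ideal J R" "J \<subseteq> L" "r > 0"
    and r: "ideal_pow R L (Suc r) = ideal_prod R J (ideal_pow R L r)"
    unfolding is_reduction_def by auto
  note ideals = K(1) J(1) assms(3) ideal_pow_is_ideal
  have L_pow: "ideal_pow R L (r + k) = ideal_prod R (ideal_pow R J k) (ideal_pow R L r)" for k
  proof (induct k)
    case 0
    then show ?case by (simp add: ideal_prod_one_left ideals)
  next
    case (Suc k)
    have "ideal_pow R L (r + Suc k) = ideal_prod R (ideal_pow R L (Suc r)) (ideal_pow R L k)"
      by (simp only: ideal_pow_add[OF assms(3), symmetric] add_Suc_right add_Suc)
    also have "\<dots> = ideal_prod R J (ideal_pow R L (r + k))"
      by (simp only: r ideal_pow_add[OF assms(3)] ideal_prod_assoc ideals)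
    also have "\<dots> = ideal_prod R (ideal_pow R J (Suc k)) (ideal_pow R L r)"
      by (simp only: Suc ideal_pow.simps(2) ideal_prod_assoc ideals)
    finally show ?case .
  qed
  have "ideal_pow R L (Suc (r + s)) = ideal_prod R (ideal_prod R K (ideal_pow R J s)) (ideal_pow R L r)"
    by (simp only: add_Suc_right[symmetric] L_pow s)
  also have "\<dots> = ideal_prod R K (ideal_pow R L (r + s))"
    by (simp only: L_pow[of s] ideal_prod_assoc ideals)
  finally show ?thesis
    unfolding is_reduction_def using K J by (intro conjI exI[of _ "r + s"]) auto
qed

lemma ideal_prod_set_add_expand:
  assumes P: "ideal P R" and L: "ideal L R" and A: "ideal A R" and Q: "ideal Q R"
  shows "ideal_prod R P (ideal_prod R (set_add R L A) Q)
           = set_add R (ideal_prod R (ideal_prod R L P) Q) (ideal_prod R A (ideal_prod R P Q))"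
  by (simp only: ideal_prod_distr ideal_prod_is_ideal assms
      ideal_prod_assoc[OF P L Q, symmetric] ideal_prod_assoc[OF P A Q, symmetric]
      ideal_prod_commute[OF P L] ideal_prod_commute[OF P A] ideal_prod_assoc[OF A P Q])

lemma reduction_set_add_power_bound:
  assumes ideals: "ideal K R" "ideal L R" "ideal A R" and "K \<subseteq> L"
    and r: "ideal_pow R L (Suc r) = ideal_prod R K (ideal_pow R L r)"
    and "i + j = Suc r"
  shows "ideal_prod R (ideal_pow R L i) (ideal_pow R (set_add R L A) j)
           \<subseteq> ideal_prod R (set_add R K A) (ideal_pow R (set_add R L A) r)"
proof -
  define L' where "L' = set_add R L A"
  define K' where "K' = set_add R K A"
  have L': "ideal L' R" "L \<union> A \<subseteq> L'"
    unfolding L'_def using add_ideals[OF ideals(2,3)] Un_subset_set_add[OF ideals(2,3)] by auto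
  have K': "ideal K' R" "K \<union> A \<subseteq> K'"
    unfolding K'_def using add_ideals[OF ideals(1,3)] Un_subset_set_add[OF ideals(1,3)] by auto
  have "ideal_prod R (ideal_pow R L i) (ideal_pow R L' j) \<subseteq> ideal_prod R K' (ideal_pow R L' r)"
    using \<open>i + j = Suc r\<close>
  proof (induction j arbitrary: i)
    case 0
    then have "i = Suc r" by simp
    then have "ideal_prod R (ideal_pow R L i) (ideal_pow R L' 0) = ideal_prod R K (ideal_pow R L r)"
      by (simp only: ideal_pow.simps(1) r ideal_prod_one ideal_prod_is_ideal ideal_pow_is_ideal ideals)
    also have "\<dots> \<subseteq> ideal_prod R K' (ideal_pow R L' r)"
      using K'(2) L'(2) by (intro ideal_prod_mono ideal_pow_mono) auto
    finally show ?case .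
  next
    case (Suc j)
    have "ideal_prod R (ideal_pow R L i) (ideal_pow R L' (Suc j))
        = set_add R (ideal_prod R (ideal_pow R L (Suc i)) (ideal_pow R L' j))
            (ideal_prod R A (ideal_prod R (ideal_pow R L i) (ideal_pow R L' j)))"
      unfolding ideal_pow.simps(2) L'_def
      by (rule ideal_prod_set_add_expand) (simp_all add: ideals ideal_pow_is_ideal add_ideals)
    also have "\<dots> \<subseteq> ideal_prod R K' (ideal_pow R L' r)"
    proof (rule set_add_subset_ideal)
      show "ideal (ideal_prod R K' (ideal_pow R L' r)) R"
        by (simp add: K'(1) L'(1) ideal_prod_is_ideal ideal_pow_is_ideal)
      show "ideal_prod R (ideal_pow R L (Suc i)) (ideal_pow R L' j) \<subseteq> ideal_prod R K' (ideal_pow R L' r)"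
        using Suc.IH[of "Suc i"] Suc.prems by simp
      have "ideal_prod R A (ideal_prod R (ideal_pow R L i) (ideal_pow R L' j))
          \<subseteq> ideal_prod R K' (ideal_prod R (ideal_pow R L' i) (ideal_pow R L' j))"
        using K'(2) L'(2) by (intro ideal_prod_mono ideal_pow_mono) auto
      also have "\<dots> = ideal_prod R K' (ideal_pow R L' r)"
        using Suc.prems by (simp add: ideal_pow_add[OF L'(1), symmetric])
      finally show "ideal_prod R A (ideal_prod R (ideal_pow R L i) (ideal_pow R L' j))
          \<subseteq> ideal_prod R K' (ideal_pow R L' r)" .
    qed
    finally show ?case .
  qed
  then show ?thesis unfolding L'_def K'_def .
qed

lemma is_reduction_set_add:
  assumes "is_reduction R K L" "ideal L R" "ideal A R"
  shows "is_reduction R (set_add R K A) (set_add R L A)"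
proof -
  from assms(1) obtain r where K: "ideal K R" "K \<subseteq> L" "r > 0"
    and r: "ideal_pow R L (Suc r) = ideal_prod R K (ideal_pow R L r)"
    unfolding is_reduction_def by auto
  have L': "ideal (set_add R L A) R" by (rule add_ideals[OF assms(2,3)])
  have "ideal_pow R (set_add R L A) (Suc r)
      = ideal_prod R (ideal_pow R L 0) (ideal_pow R (set_add R L A) (Suc r))"
    by (simp only: ideal_pow.simps(1) ideal_prod_one_left[OF ideal_pow_is_ideal[OF L']])
  also have "\<dots> \<subseteq> ideal_prod R (set_add R K A) (ideal_pow R (set_add R L A) r)"
    by (rule reduction_set_add_power_bound[OF K(1) assms(2,3) K(2) r]) simp
  also have "\<dots> \<subseteq> ideal_pow R (set_add R L A) (Suc r)"
    unfolding ideal_pow.simps(2) by (intro ideal_prod_mono set_add_mono K(2) order_refl)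
  finally show ?thesis
    unfolding is_reduction_def using K add_ideals[OF K(1) assms(3)] set_add_mono[OF K(2)]
    by blast
qed

lemma n_generated_reduction_insert:
  assumes hyp: "\<forall>J. ideal J R \<and> n_generated R (Suc n) J \<and> J \<subseteq> I
                   \<and> ideal_radical R J = ideal_radical R I
                   \<longrightarrow> (\<exists>K. n_generated R n K \<and> is_reduction R K J)"
    and I: "ideal I R" and "S \<subseteq> I" "ideal_radical R I \<subseteq> ideal_radical R (Idl S)"
    and K: "n_generated R n K" "is_reduction R K (Idl S)" and "b \<in> I"
  shows "\<exists>K'. n_generated R n K' \<and> is_reduction R K' (Idl (insert b S))"
proof -
  have S: "S \<subseteq> carrier R" and b: "b \<in> carrier R"
    using \<open>S \<subseteq> I\<close> \<open>b \<in> I\<close> ideal.Icarr[OF I] by auto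
  have L: "ideal (Idl S) R" and B: "ideal (Idl {b}) R"
    using S b by (simp_all add: genideal_ideal)
  obtain ys where ys: "length ys = n" "set ys \<subseteq> carrier R" "K = Idl (set ys)"
    using K(1) unfolding n_generated_def by blast
  define J where "J = Idl (insert b (set ys))"
  have J_eq: "J = set_add R K (Idl {b})"
    unfolding J_def ys(3) using genideal_Un[OF ys(2), of "{b}"] b by simp
  have J: "ideal J R" "n_generated R (Suc n) J"
    unfolding J_def n_generated_def using ys b
    by (auto intro!: genideal_ideal exI[of _ "b # ys"])
  have KS: "K \<subseteq> Idl S" using K(2) unfolding is_reduction_def by blast
  have KJ: "K \<subseteq> J"
    using Un_subset_set_add[OF genideal_ideal[OF ys(2)] B] unfolding J_eq ys(3) by blast
  have JI: "J \<subseteq> I"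
  proof (unfold J_eq, rule set_add_subset_ideal[OF I])
    show "K \<subseteq> I" using KS genideal_minimal[OF I \<open>S \<subseteq> I\<close>] by blast
    show "Idl {b} \<subseteq> I" using genideal_minimal[OF I] \<open>b \<in> I\<close> by blast
  qed
  have "ideal_radical R I \<subseteq> ideal_radical R J"
    using assms(4) is_reduction_radical_eq[OF K(2) L] ideal_radical_mono[OF KJ, of R] by blast
  then obtain K' where "n_generated R n K'" "is_reduction R K' J"
    using hyp J JI ideal_radical_mono[OF JI] by blast
  moreover have "is_reduction R J (Idl (insert b S))"
    using is_reduction_set_add[OF K(2) L B] genideal_Un[OF S, of "{b}"] b
    unfolding J_eq by simp
  ultimately show ?thesis
    using is_reduction_trans genideal_ideal S b by blast
qed

lemma n_generated_reduction_of_radical_generators: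
  assumes hyp: "\<forall>J. ideal J R \<and> n_generated R (Suc n) J \<and> J \<subseteq> I
                   \<and> ideal_radical R J = ideal_radical R I
                   \<longrightarrow> (\<exists>K. n_generated R n K \<and> is_reduction R K J)"
    and I: "ideal I R"
    and xs: "length xs = n" "set xs \<subseteq> I" "ideal_radical R (Idl (set xs)) = ideal_radical R I"
    and "finite B" "B \<subseteq> I"
  shows "\<exists>K. n_generated R n K \<and> is_reduction R K (Idl (set xs \<union> B))"
  using \<open>finite B\<close> \<open>B \<subseteq> I\<close>
proof (induction B rule: finite_induct)
  case empty
  have "set xs \<subseteq> carrier R" using xs(2) ideal.Icarr[OF I] by blast
  then show ?case
    using xs(1) is_reduction_refl[OF genideal_ideal] unfolding n_generated_def by auto
next
  case (insert b B)
  have "ideal_radical R I \<subseteq> ideal_radical R (Idl (set xs \<union> B))"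
  proof -
    have "set xs \<union> B \<subseteq> carrier R" using xs(2) insert.prems ideal.Icarr[OF I] by blast
    then have "Idl (set xs) \<subseteq> Idl (set xs \<union> B)" by (rule subset_Idl_subset) blast
    then show ?thesis using xs(3) ideal_radical_mono by blast
  qed
  then show ?case
    using n_generated_reduction_insert[OF hyp I, of "set xs \<union> B"] insert xs(2) by auto
qed

end

context noetherian_ring
begin

lemma ara_attained:
  assumes "ideal I R"
  shows "\<exists>xs. length xs = ara R I \<and> set xs \<subseteq> I
               \<and> ideal_radical R (Idl (set xs)) = ideal_radical R I"
proof -
  obtain A where A: "A \<subseteq> carrier R" "finite A" "I = Idl A"
    using finetely_gen[OF assms] by blast
  obtain gs where "set gs = A" using finite_list[OF A(2)] by blast
  then have "\<exists>xs. length xs = length gs \<and> set xs \<subseteq> I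
               \<and> ideal_radical R (Idl (set xs)) = ideal_radical R I"
    using A genideal_self by blast
  then show ?thesis
    unfolding ara_def by (rule LeastI_ex[OF exI])
qed

lemma radical_generators_of_length:
  assumes "ideal I R" "ara R I \<le> n"
  shows "\<exists>xs. length xs = n \<and> set xs \<subseteq> I
               \<and> ideal_radical R (Idl (set xs)) = ideal_radical R I"
proof -
  obtain xs where xs: "length xs = ara R I" "set xs \<subseteq> I"
      "ideal_radical R (Idl (set xs)) = ideal_radical R I"
    using ara_attained[OF assms(1)] by blast
  define ys where "ys = xs @ replicate (n - ara R I) \<zero>"
  have "set xs \<subseteq> carrier R" using xs(2) ideal.Icarr[OF assms(1)] by blast
  then have "Idl (set ys) = Idl (set xs)"
    unfolding ys_def using assms(2)
    by (cases "n = ara R I") (simp_all add: set_replicate genideal_insert_zero)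
  moreover have "\<zero> \<in> I"
    using assms(1) by (simp add: additive_subgroup.zero_closed ideal.axioms(1))
  ultimately show ?thesis
    using xs assms(2) by (intro exI[of _ ys]) (auto simp: ys_def)
qed

end

theorem lemma2p3:
  fixes R :: "('a, 'b) ring_scheme" and I :: "'a set" and n :: nat
  assumes "cring R" and "noetherian_ring R"
    and "ideal I R" and "I \<noteq> carrier R"
    and "n \<ge> ara R I"
    and "\<forall>J. ideal J R \<and> n_generated R (Suc n) J \<and> J \<subseteq> I
              \<and> ideal_radical R J = ideal_radical R I
              \<longrightarrow> (\<exists>K. n_generated R n K \<and> is_reduction R K J)"
  shows "\<exists>K. n_generated R n K \<and> is_reduction R K I"
proof -
  interpret cring R by fact
  interpret noetherian_ring R by fact
  obtain xs where xs: "length xs = n" "set xs \<subseteq> I"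
      "ideal_radical R (Idl\<^bsub>R\<^esub> (set xs)) = ideal_radical R I"
    using radical_generators_of_length[OF assms(3,5)] by blast
  obtain A where A: "A \<subseteq> carrier R" "finite A" "I = Idl\<^bsub>R\<^esub> A"
    using finetely_gen[OF assms(3)] by blast
  have "A \<subseteq> I" using A genideal_self by blast
  moreover have "Idl\<^bsub>R\<^esub> (set xs \<union> A) = I"
  proof
    show "Idl\<^bsub>R\<^esub> (set xs \<union> A) \<subseteq> I"
      using xs(2) \<open>A \<subseteq> I\<close> by (intro genideal_minimal[OF assms(3)]) blast
    show "I \<subseteq> Idl\<^bsub>R\<^esub> (set xs \<union> A)"
      unfolding A(3) using A(1) xs(2) ideal.Icarr[OF assms(3)] by (intro subset_Idl_subset) auto
  qed
  ultimately show ?thesis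
    using n_generated_reduction_of_radical_generators[OF assms(6,3) xs A(2)] by auto
qed

end
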